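(* Let $\mathbb{K}\in\{\mathbb{R},\mathbb{C}\}$ and let $\mathcal{E}$ be a class of Banach spaces over $\mathbb{K}$ closed under isometric isomorphisms. Let $I$ be an index set and $E$ a subspace of $\mathbb{R}^I$ containing all $e_i$, endowed with a complete absolute normalised norm such that $\operatorname{span}\{e_i:i\in I\}$ is dense in $E$. Let $(X_i)_{i\in I}$ be a family of Banach spaces over $\mathbb{K}$ such that $\big[\bigoplus_{i\in J}X_i\big]_E\in\mathcal{E}$ for every nonempty finite subset $J\subseteq I$. If there is a test family for $\mathcal{E}$ in $\big[\bigoplus_{i\in I}X_i\big]_E$, then $\big[\bigoplus_{i\in I}X_i\big]_E\in\mathcal{E}$.
   Context: $e_i$ is the characteristic function of $\{i\}$. A norm on $E\subseteq\mathbb{R}^I$ is absolute if whenever $(a_i)\in E$, $(b_i)\in\mathbb{R}^I$ and $|a_i|=|b_i|$ for all $i$, then $(b_i)\in E$ and $\|(a_i)\|_E=\|(b_i)\|_E$; normalised if $\|e_i\|_E=1$ for all $i$. $\big[\bigoplus_{i\in I}X_i\big]_E=\{(x_i)\in\prod X_i:(\|x_i\|)_i\in E\}$ with norm $\|(x_i)\|=\|(\|x_i\|)_i\|_E$. $\big[\bigoplus_{i\in J}X_i\big]_E$ denotes the same sum where all summands with index in $I\setminus J$ are replaced by $\{0\}$. Notation: for a Banach space $Y$, $Y^*$ is its dual, $B_Y$ its closed unit ball, $S_Y$ its unit sphere; $B_Y^{\mathrm{fin}}$, $S_Y^{\mathrm{fin}}$ denote the sets of all finite sequences in $B_Y$,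 $S_Y$, and $B_Y^n$ the sequences of length $n$. $\|(x_1,\dots,x_n)\|_\infty=\max_i\|x_i\|$. $\mathcal{U}(Z)$ is the set of all closed subspaces $U\ne\{0\}$ of $Z$ (including $Z$); $\mathbf{x}^*|_U$ denotes componentwise restriction. Test family for $\mathcal{E}$ in $Z$: real-valued functions $F_{\varepsilon,U}$ on $B_U^{\mathrm{fin}}\times B_{U^*}^{\mathrm{fin}}\times B_U^{\mathrm{fin}}\times B_{U^*}^{\mathrm{fin}}$ ($U\in\mathcal{U}(Z)$, $\varepsilon>0$) with: (i) $U\in\mathcal{E}$ iff for every $\varepsilon>0$, $\mathbf{x}\in S_U^{\mathrm{fin}}$, $\mathbf{x}^*\in S_{U^*}^{\mathrm{fin}}$ there exist $\mathbf{y}\in S_U^{\mathrm{fin}}$, $\mathbf{y}^*\in S_{U^*}^{\mathrm{fin}}$ with $F_{\varepsilon,U}(\mathbf{x},\mathbf{x}^*,\mathbf{y},\mathbf{y}^* )\le\varepsilon$; (ii) $F_{\varepsilon_1,U}\ge F_{\varepsilon_2,U}$ for $0<\varepsilon_1<\varepsilon_2$; (iii) there is $c>0$ with $F_{\varepsilon,Z}(\mathbf{x},\mathbf{x}^*,\mathbf{y},\mathbf{y}^* )\le cF_{\varepsilon,U}(\mathbf{x},\mathbf{x}^*|_U,\mathbf{y},\mathbf{y}^*|_U)$ for all $U,\varepsilon$, $\mathbf{x},\mathbf{y}\in B_U^{\mathrm{fin}}$, $\mathbf{x}^*,\mathbf{y}^*\in B_{Z^*}^{\mathrm{fin}}$;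 (iv) for every $\varepsilon,\tau>0$, $\mathbf{x}^*\in B_{Z^*}^{\mathrm{fin}}$, $n$, $\mathbf{x}\in B_Z^n$ there is $\delta>0$ with $|F_{\varepsilon,Z}(\mathbf{x},\mathbf{x}^*,\mathbf{y},\mathbf{y}^* )-F_{\varepsilon,Z}(\mathbf{z},\mathbf{x}^*,\mathbf{y},\mathbf{y}^* )|\le\tau$ for all $\mathbf{y}\in B_Z^{\mathrm{fin}}$, $\mathbf{y}^*\in B_{Z^*}^{\mathrm{fin}}$, $\mathbf{z}\in B_Z^n$ with $\|\mathbf{x}-\mathbf{z}\|_\infty\le\delta$; (v) for every $\varepsilon>0$, $n,m$, $\eta>0$ there is $\theta>0$ such that for all $U\in\mathcal{U}(Z)$, $|F_{\varepsilon,U}(\mathbf{x},\mathbf{x}^*,\mathbf{y},\mathbf{y}^* )-F_{\varepsilon,U}(\mathbf{x},\mathbf{z}^*,\mathbf{y},\mathbf{y}^* )|\le\eta$ for all $\mathbf{x}\in B_U^n$, $\mathbf{y}\in B_U^{\mathrm{fin}}$, $\mathbf{y}^*\in B_{U^*}^{\mathrm{fin}}$, $\mathbf{x}^*,\mathbf{z}^*\in B_{U^*}^m$ with $\|\mathbf{x}^*-\mathbf{z}^*\|_\infty\le\theta$. *)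

theory Defs
  imports "HOL-Analysis.Analysis"
begin

(* A complex Banach space is represented as a real Banach space 'a together *)
(* with a complex scalar multiplication extending scaleR.                  *)

definition complex_structure :: "(complex \<Rightarrow> 'a::real_normed_vector \<Rightarrow> 'a) \<Rightarrow> bool" where
  "complex_structure sc \<longleftrightarrow>
     (\<forall>r x. sc (complex_of_real r) x = r *\<^sub>R x) \<and>
     (\<forall>a b x. sc (a * b) x = sc a (sc b x)) \<and>
     (\<forall>a b x. sc (a + b) x = sc a x + sc b x) \<and>
     (\<forall>a x y. sc a (x + y) = sc a x + sc a y) \<and>
     (\<forall>a x. norm (sc a x) = cmod a * norm x)"

(* The sequence space E \<subseteq> R^I (here I = UNIV :: 'i set)                *)

definition unitvec :: "'i \<Rightarrow> 'i \<Rightarrow> real" where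
  "unitvec i = (\<lambda>j. if j = i then 1 else 0)"

definition abs_norm_seq_space :: "('i \<Rightarrow> real) set \<Rightarrow> (('i \<Rightarrow> real) \<Rightarrow> real) \<Rightarrow> bool" where
  "abs_norm_seq_space E nE \<longleftrightarrow>
     \<comment> \<open>E is a linear subspace of R^I containing all e_i\<close>
     (\<lambda>i. 0) \<in> E \<and>
     (\<forall>a\<in>E. \<forall>b\<in>E. (\<lambda>i. a i + b i) \<in> E) \<and>
     (\<forall>a\<in>E. \<forall>c. (\<lambda>i. c * a i) \<in> E) \<and>
     (\<forall>i. unitvec i \<in> E) \<and>
     \<comment> \<open>nE is a norm on E\<close>
     (\<forall>a\<in>E. nE a = 0 \<longleftrightarrow> a = (\<lambda>i. 0)) \<and>
     (\<forall>a\<in>E. \<forall>b\<in>E. nE (\<lambda>i. a i + b i) \<le> nE a + nE b) \<and>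
     (\<forall>a\<in>E. \<forall>c. nE (\<lambda>i. c * a i) = \<bar>c\<bar> * nE a) \<and>
     \<comment> \<open>complete\<close>
     (\<forall>s. (\<forall>n. s n \<in> E) \<and>
          (\<forall>\<epsilon>>0. \<exists>M. \<forall>m\<ge>M. \<forall>n\<ge>M. nE (\<lambda>i. s m i - s n i) < \<epsilon>)
          \<longrightarrow> (\<exists>a\<in>E. (\<lambda>n. nE (\<lambda>i. s n i - a i)) \<longlonglongrightarrow> 0)) \<and>
     \<comment> \<open>absolute\<close>
     (\<forall>a\<in>E. \<forall>b. (\<forall>i. \<bar>a i\<bar> = \<bar>b i\<bar>) \<longrightarrow> b \<in> E \<and> nE b = nE a) \<and>
     \<comment> \<open>normalised\<close>
     (\<forall>i. nE (unitvec i) = 1) \<and>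
     \<comment> \<open>span of the e_i is dense in E\<close>
     (\<forall>a\<in>E. \<forall>\<epsilon>>0. \<exists>J c. finite J \<and>
          nE (\<lambda>j. a j - (\<Sum>i\<in>J. c i * unitvec i j)) < \<epsilon>)"

definition esum :: "('i \<Rightarrow> 'a::real_normed_vector set) \<Rightarrow> ('i \<Rightarrow> real) set \<Rightarrow> ('i \<Rightarrow> 'a) set" where
  "esum X E = {x. (\<forall>i. x i \<in> X i) \<and> (\<lambda>i. norm (x i)) \<in> E}"

definition esum_norm :: "(('i \<Rightarrow> real) \<Rightarrow> real) \<Rightarrow> ('i \<Rightarrow> 'a::real_normed_vector) \<Rightarrow> real" where
  "esum_norm nE x = nE (\<lambda>i. norm (x i))"

definition esum_part :: "('i \<Rightarrow> 'a::real_normed_vector set) \<Rightarrow> ('i \<Rightarrow> real) set \<Rightarrow> 'i set \<Rightarrow> ('i \<Rightarrow> 'a) set" where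
  "esum_part X E J = {x \<in> esum X E. \<forall>i. i \<notin> J \<longrightarrow> x i = 0}"

definition vsc :: "('k \<Rightarrow> 'a \<Rightarrow> 'a) \<Rightarrow> 'k \<Rightarrow> ('i \<Rightarrow> 'a) \<Rightarrow> ('i \<Rightarrow> 'a)" where
  "vsc sc c x = (\<lambda>i. sc c (x i))"

definition lin_subspace :: "('k \<Rightarrow> 'a::real_normed_vector \<Rightarrow> 'a) \<Rightarrow> ('i \<Rightarrow> 'a) set \<Rightarrow> ('i \<Rightarrow> 'a) set \<Rightarrow> bool" where
  "lin_subspace sc V U \<longleftrightarrow> U \<subseteq> V \<and> (\<lambda>i. 0) \<in> U \<and>
     (\<forall>x\<in>U. \<forall>y\<in>U. (\<lambda>i. x i + y i) \<in> U) \<and> (\<forall>c. \<forall>x\<in>U. vsc sc c x \<in> U)"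

definition norm_closed :: "(('i \<Rightarrow> 'a::real_normed_vector) \<Rightarrow> real) \<Rightarrow> ('i \<Rightarrow> 'a) set \<Rightarrow> ('i \<Rightarrow> 'a) set \<Rightarrow> bool" where
  "norm_closed N V U \<longleftrightarrow> (\<forall>s v. (\<forall>n. s n \<in> U) \<and> v \<in> V \<and>
       (\<lambda>n. N (\<lambda>i. s n i - v i)) \<longlonglongrightarrow> 0 \<longrightarrow> v \<in> U)"

definition closed_subspaces :: "('k \<Rightarrow> 'a::real_normed_vector \<Rightarrow> 'a) \<Rightarrow> (('i \<Rightarrow> 'a) \<Rightarrow> real) \<Rightarrow> ('i \<Rightarrow> 'a) set \<Rightarrow> ('i \<Rightarrow> 'a) set set" where
  "closed_subspaces sc N V = {U. lin_subspace sc V U \<and> norm_closed N V U}"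

definition nz_subspaces :: "('k \<Rightarrow> 'a::real_normed_vector \<Rightarrow> 'a) \<Rightarrow> (('i \<Rightarrow> 'a) \<Rightarrow> real) \<Rightarrow> ('i \<Rightarrow> 'a) set \<Rightarrow> ('i \<Rightarrow> 'a) set set" where
  "nz_subspaces sc N V = {U \<in> closed_subspaces sc N V. U \<noteq> {(\<lambda>i. 0)}}"

definition isometric :: "('k \<Rightarrow> 'a::real_normed_vector \<Rightarrow> 'a) \<Rightarrow> (('i \<Rightarrow> 'a) \<Rightarrow> real) \<Rightarrow> ('i \<Rightarrow> 'a) set \<Rightarrow> ('i \<Rightarrow> 'a) set \<Rightarrow> bool" where
  "isometric sc N U W \<longleftrightarrow> (\<exists>T. bij_betw T U W \<and>
     (\<forall>x\<in>U. \<forall>y\<in>U. T (\<lambda>i. x i + y i) = (\<lambda>i. T x i + T y i)) \<and>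
     (\<forall>c. \<forall>x\<in>U. T (vsc sc c x) = vsc sc c (T x)) \<and>
     (\<forall>x\<in>U. N (T x) = N x))"

definition iso_closed :: "('k \<Rightarrow> 'a::real_normed_vector \<Rightarrow> 'a) \<Rightarrow> (('i \<Rightarrow> 'a) \<Rightarrow> real) \<Rightarrow> ('i \<Rightarrow> 'a) set \<Rightarrow> (('i \<Rightarrow> 'a) set \<Rightarrow> bool) \<Rightarrow> bool" where
  "iso_closed sc N V Ecl \<longleftrightarrow> (\<forall>U\<in>closed_subspaces sc N V. \<forall>W\<in>closed_subspaces sc N V.
       Ecl U \<and> isometric sc N U W \<longrightarrow> Ecl W)"

definition nball :: "(('i \<Rightarrow> 'a) \<Rightarrow> real) \<Rightarrow> ('i \<Rightarrow> 'a) set \<Rightarrow> ('i \<Rightarrow> 'a) set" where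
  "nball N U = {x \<in> U. N x \<le> 1}"

definition nsphere :: "(('i \<Rightarrow> 'a) \<Rightarrow> real) \<Rightarrow> ('i \<Rightarrow> 'a) set \<Rightarrow> ('i \<Rightarrow> 'a) set" where
  "nsphere N U = {x \<in> U. N x = 1}"

text \<open>Elements of U^*: bounded K-linear functionals on U, normalised to be 0 outside U.\<close>
definition bdd_functional :: "('k::real_normed_field \<Rightarrow> 'a::real_normed_vector \<Rightarrow> 'a) \<Rightarrow> (('i \<Rightarrow> 'a) \<Rightarrow> real) \<Rightarrow> ('i \<Rightarrow> 'a) set \<Rightarrow> (('i \<Rightarrow> 'a) \<Rightarrow> 'k) \<Rightarrow> bool" where
  "bdd_functional sc N U f \<longleftrightarrow>
     (\<forall>x\<in>U. \<forall>y\<in>U. f (\<lambda>i. x i + y i) = f x + f y) \<and>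
     (\<forall>c. \<forall>x\<in>U. f (vsc sc c x) = c * f x) \<and>
     (\<forall>v. v \<notin> U \<longrightarrow> f v = 0) \<and>
     (\<exists>C. \<forall>x\<in>U. norm (f x) \<le> C * N x)"

definition dnorm :: "(('i \<Rightarrow> 'a) \<Rightarrow> real) \<Rightarrow> ('i \<Rightarrow> 'a) set \<Rightarrow> (('i \<Rightarrow> 'a) \<Rightarrow> 'k::real_normed_field) \<Rightarrow> real" where
  "dnorm N U f = (SUP x\<in>nball N U. norm (f x))"

definition dball :: "('k::real_normed_field \<Rightarrow> 'a::real_normed_vector \<Rightarrow> 'a) \<Rightarrow> (('i \<Rightarrow> 'a) \<Rightarrow> real) \<Rightarrow> ('i \<Rightarrow> 'a) set \<Rightarrow> (('i \<Rightarrow> 'a) \<Rightarrow> 'k) set" where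
  "dball sc N U = {f. bdd_functional sc N U f \<and> dnorm N U f \<le> 1}"

definition dsphere :: "('k::real_normed_field \<Rightarrow> 'a::real_normed_vector \<Rightarrow> 'a) \<Rightarrow> (('i \<Rightarrow> 'a) \<Rightarrow> real) \<Rightarrow> ('i \<Rightarrow> 'a) set \<Rightarrow> (('i \<Rightarrow> 'a) \<Rightarrow> 'k) set" where
  "dsphere sc N U = {f. bdd_functional sc N U f \<and> dnorm N U f = 1}"

definition restr :: "('i \<Rightarrow> 'a) set \<Rightarrow> (('i \<Rightarrow> 'a) \<Rightarrow> 'k::zero) \<Rightarrow> (('i \<Rightarrow> 'a) \<Rightarrow> 'k)" where
  "restr U f = (\<lambda>v. if v \<in> U then f v else 0)"

definition lists_n :: "'b set \<Rightarrow> nat \<Rightarrow> 'b list set" where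
  "lists_n A n = {xs \<in> lists A. length xs = n}"

definition test_family ::
  "('k::real_normed_field \<Rightarrow> 'a::real_normed_vector \<Rightarrow> 'a) \<Rightarrow> (('i \<Rightarrow> 'a) \<Rightarrow> real) \<Rightarrow> ('i \<Rightarrow> 'a) set
   \<Rightarrow> (('i \<Rightarrow> 'a) set \<Rightarrow> bool)
   \<Rightarrow> (real \<Rightarrow> ('i \<Rightarrow> 'a) set \<Rightarrow> ('i \<Rightarrow> 'a) list \<Rightarrow> (('i \<Rightarrow> 'a) \<Rightarrow> 'k) list
        \<Rightarrow> ('i \<Rightarrow> 'a) list \<Rightarrow> (('i \<Rightarrow> 'a) \<Rightarrow> 'k) list \<Rightarrow> real) \<Rightarrow> bool" where
  "test_family sc N Z Ecl F \<longleftrightarrow>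
   \<comment> \<open>(i)\<close>
   (\<forall>U\<in>nz_subspaces sc N Z.
      Ecl U \<longleftrightarrow>
      (\<forall>\<epsilon>>0. \<forall>xs\<in>lists (nsphere N U). \<forall>fs\<in>lists (dsphere sc N U).
         \<exists>ys\<in>lists (nsphere N U). \<exists>gs\<in>lists (dsphere sc N U). F \<epsilon> U xs fs ys gs \<le> \<epsilon>)) \<and>
   \<comment> \<open>(ii)\<close>
   (\<forall>U\<in>nz_subspaces sc N Z. \<forall>\<epsilon>1 \<epsilon>2. 0 < \<epsilon>1 \<and> \<epsilon>1 < \<epsilon>2 \<longrightarrow>
      (\<forall>xs\<in>lists (nball N U). \<forall>fs\<in>lists (dball sc N U).
       \<forall>ys\<in>lists (nball N U). \<forall>gs\<in>lists (dball sc N U).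
         F \<epsilon>1 U xs fs ys gs \<ge> F \<epsilon>2 U xs fs ys gs)) \<and>
   \<comment> \<open>(iii)\<close>
   (\<exists>c>0. \<forall>U\<in>nz_subspaces sc N Z. \<forall>\<epsilon>>0.
      \<forall>xs\<in>lists (nball N U). \<forall>ys\<in>lists (nball N U).
      \<forall>fs\<in>lists (dball sc N Z). \<forall>gs\<in>lists (dball sc N Z).
        F \<epsilon> Z xs fs ys gs \<le> c * F \<epsilon> U xs (map (restr U) fs) ys (map (restr U) gs)) \<and>
   \<comment> \<open>(iv)\<close>
   (\<forall>\<epsilon>>0. \<forall>\<tau>>0. \<forall>fs\<in>lists (dball sc N Z). \<forall>n. \<forall>xs\<in>lists_n (nball N Z) n.
      \<exists>\<delta>>0. \<forall>ys\<in>lists (nball N Z). \<forall>gs\<in>lists (dball sc N Z). \<forall>zs\<in>lists_n (nball N Z) n.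
        (\<forall>k<n. N (\<lambda>i. (xs!k) i - (zs!k) i) \<le> \<delta>) \<longrightarrow>
        \<bar>F \<epsilon> Z xs fs ys gs - F \<epsilon> Z zs fs ys gs\<bar> \<le> \<tau>) \<and>
   \<comment> \<open>(v)\<close>
   (\<forall>\<epsilon>>0. \<forall>n m. \<forall>\<eta>>0. \<exists>\<theta>>0. \<forall>U\<in>nz_subspaces sc N Z.
      \<forall>xs\<in>lists_n (nball N U) n. \<forall>ys\<in>lists (nball N U). \<forall>gs\<in>lists (dball sc N U).
      \<forall>fs\<in>lists_n (dball sc N U) m. \<forall>hs\<in>lists_n (dball sc N U) m.
        (\<forall>k<m. dnorm N U (\<lambda>v. (fs!k) v - (hs!k) v) \<le> \<theta>) \<longrightarrow>
        \<bar>F \<epsilon> U xs fs ys gs - F \<epsilon> U xs hs ys gs\<bar> \<le> \<eta>)"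

definition banach_family :: "('k \<Rightarrow> 'a::banach \<Rightarrow> 'a) \<Rightarrow> ('i \<Rightarrow> 'a set) \<Rightarrow> bool" where
  "banach_family sc X \<longleftrightarrow> (\<forall>i. closed (X i) \<and> 0 \<in> X i \<and>
     (\<forall>x\<in>X i. \<forall>y\<in>X i. x + y \<in> X i) \<and> (\<forall>c. \<forall>x\<in>X i. sc c x \<in> X i))"

definition prop34_hyps ::
  "('k::real_normed_field \<Rightarrow> 'a::banach \<Rightarrow> 'a) \<Rightarrow> ('i \<Rightarrow> 'a set) \<Rightarrow> ('i \<Rightarrow> real) set \<Rightarrow> (('i \<Rightarrow> real) \<Rightarrow> real)
   \<Rightarrow> (('i \<Rightarrow> 'a) set \<Rightarrow> bool)
   \<Rightarrow> (real \<Rightarrow> ('i \<Rightarrow> 'a) set \<Rightarrow> ('i \<Rightarrow> 'a) list \<Rightarrow> (('i \<Rightarrow> 'a) \<Rightarrow> 'k) list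
        \<Rightarrow> ('i \<Rightarrow> 'a) list \<Rightarrow> (('i \<Rightarrow> 'a) \<Rightarrow> 'k) list \<Rightarrow> real) \<Rightarrow> bool" where
  "prop34_hyps sc X E nE Ecl F \<longleftrightarrow>
     iso_closed sc (esum_norm nE) (esum X E) Ecl \<and>
     abs_norm_seq_space E nE \<and>
     banach_family sc X \<and>
     (\<forall>J. finite J \<and> J \<noteq> {} \<longrightarrow> Ecl (esum_part X E J)) \<and>
     test_family sc (esum_norm nE) (esum X E) Ecl F"

end

theory Submission
  imports Defs
begin

text \<open>
  An absolute norm is solid, so with the density of the finitely supported sequences every vector
  of the \<open>E\<close>-sum \<open>Z\<close> is the limit of its truncations to finite index sets \<open>J\<close>. Given finitely
  many unit vectors and norm-one functionals on \<open>Z\<close>, take \<open>J\<close> so large that the renormalised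
  truncations of the vectors stay close to them, and that the restrictions of the functionals to
  the finite sum \<open>Z\<^sub>J\<close> keep norm close to one (test them at almost norming points), so that they
  can be renormalised with little change. Since \<open>Z\<^sub>J\<close> belongs to the class, (i) provides
  witnesses in \<open>Z\<^sub>J\<close>; functionals on \<open>Z\<^sub>J\<close> extend to \<open>Z\<close> with the same norm through the
  projection onto \<open>Z\<^sub>J\<close>, and (ii)--(v) carry the estimate over from \<open>Z\<^sub>J\<close> to \<open>Z\<close>.
\<close>

definition trunc :: "'i set \<Rightarrow> ('i \<Rightarrow> 'b::zero) \<Rightarrow> 'i \<Rightarrow> 'b" where
  "trunc J x = (\<lambda>i. if i \<in> J then x i else 0)"

lemma diff_trunc_eq: "(\<lambda>i. x i - trunc J x i) = trunc (- J) (x :: 'i \<Rightarrow> 'b::ab_group_add)"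
  by (auto simp: trunc_def)

lemma list_all2_choice:
  "(\<And>x. x \<in> set xs \<Longrightarrow> \<exists>y\<in>A. P x y) \<Longrightarrow> \<exists>ys\<in>lists A. list_all2 P xs ys"
proof (induction xs)
  case (Cons x xs)
  then obtain ys y where "ys \<in> lists A" "list_all2 P xs ys" "y \<in> A" "P x y"
    by (meson list.set_intros)
  then show ?case by (intro bexI[of _ "y # ys"]) auto
qed simp

section \<open>Absolute normed sequence spaces are solid\<close>

locale abs_seq_space =
  fixes E :: "('i \<Rightarrow> real) set" and nE :: "('i \<Rightarrow> real) \<Rightarrow> real"
  assumes abs_norm_seq_space: "abs_norm_seq_space E nE"
begin

lemma E_zero: "(\<lambda>i. 0) \<in> E"
  and E_add: "a \<in> E \<Longrightarrow> b \<in> E \<Longrightarrow> (\<lambda>i. a i + b i) \<in> E"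
  and E_scale: "a \<in> E \<Longrightarrow> (\<lambda>i. c * a i) \<in> E"
  and E_unitvec: "unitvec i \<in> E"
  and nE_eq_0_iff: "a \<in> E \<Longrightarrow> nE a = 0 \<longleftrightarrow> a = (\<lambda>i. 0)"
  and nE_triangle: "a \<in> E \<Longrightarrow> b \<in> E \<Longrightarrow> nE (\<lambda>i. a i + b i) \<le> nE a + nE b"
  and nE_scale: "a \<in> E \<Longrightarrow> nE (\<lambda>i. c * a i) = \<bar>c\<bar> * nE a"
  and E_absolute: "a \<in> E \<Longrightarrow> (\<forall>i. \<bar>a i\<bar> = \<bar>b i\<bar>) \<Longrightarrow> b \<in> E \<and> nE b = nE a"
  and nE_unitvec: "nE (unitvec i) = 1"
  and E_span_dense: "a \<in> E \<Longrightarrow> \<epsilon> > 0 \<Longrightarrow>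
         \<exists>J c. finite J \<and> nE (\<lambda>j. a j - (\<Sum>i\<in>J. c i * unitvec i j)) < \<epsilon>"
  using abs_norm_seq_space unfolding abs_norm_seq_space_def by blast+

lemma E_complete:
  assumes "\<And>n. s n \<in> E" and "\<And>\<epsilon>. \<epsilon> > 0 \<Longrightarrow> \<exists>M. \<forall>m\<ge>M. \<forall>n\<ge>M. nE (\<lambda>i. s m i - s n i) < \<epsilon>"
  shows "\<exists>a\<in>E. (\<lambda>n. nE (\<lambda>i. s n i - a i)) \<longlonglongrightarrow> 0"
  using abs_norm_seq_space assms unfolding abs_norm_seq_space_def by blast

lemma E_uminus: "a \<in> E \<Longrightarrow> (\<lambda>i. - a i) \<in> E"
  using E_scale[of a "-1"] by simp

lemma E_diff: "a \<in> E \<Longrightarrow> b \<in> E \<Longrightarrow> (\<lambda>i. a i - b i) \<in> E"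
  using E_add[OF _ E_uminus, of a b] by simp

lemma nE_uminus: "a \<in> E \<Longrightarrow> nE (\<lambda>i. - a i) = nE a"
  using nE_scale[of a "-1"] by simp

lemma nE_zero: "nE (\<lambda>i. 0) = 0"
  using nE_eq_0_iff[OF E_zero] by simp

lemma nE_nonneg: assumes a: "a \<in> E" shows "0 \<le> nE a"
proof -
  have "nE (\<lambda>i. a i + - a i) \<le> nE a + nE (\<lambda>i. - a i)" by (rule nE_triangle[OF a E_uminus[OF a]])
  then show ?thesis using nE_uminus[OF a] nE_zero by simp
qed

lemma nE_commute: "a \<in> E \<Longrightarrow> b \<in> E \<Longrightarrow> nE (\<lambda>i. a i - b i) = nE (\<lambda>i. b i - a i)"
  using nE_uminus[OF E_diff, of b a] by simp

lemma nE_diff_le: "a \<in> E \<Longrightarrow> b \<in> E \<Longrightarrow> nE (\<lambda>i. a i - b i) \<le> nE a + nE b"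
  using nE_triangle[OF _ E_uminus, of a b] nE_uminus[of b] by simp

lemma E_finite_support: "finite S \<Longrightarrow> {i. a i \<noteq> 0} \<subseteq> S \<Longrightarrow> a \<in> E"
proof (induction S arbitrary: a rule: finite_induct)
  case empty
  then have "a = (\<lambda>i. 0)" by auto
  then show ?case using E_zero by simp
next
  case (insert k S)
  have "a(k := 0) \<in> E" by (rule insert.IH) (use insert.prems in auto)
  moreover have "a = (\<lambda>i. (a(k := 0)) i + a k * unitvec k i)" by (auto simp: unitvec_def)
  ultimately show ?case using E_add[OF _ E_scale[OF E_unitvec]] by metis
qed

lemma E_trunc: "finite J \<Longrightarrow> trunc J a \<in> E"
  by (rule E_finite_support) (auto simp: trunc_def)

lemma E_trunc_compl: "a \<in> E \<Longrightarrow> finite J \<Longrightarrow> trunc (- J) a \<in> E"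
  using E_diff[OF _ E_trunc] diff_trunc_eq by metis

lemma abs_le_nE: assumes a: "a \<in> E" shows "\<bar>a k\<bar> \<le> nE a"
proof -
  have flip: "a(k := - a k) \<in> E" "nE (a(k := - a k)) = nE a"
    using E_absolute[OF a, of "a(k := - a k)"] by auto
  have "\<bar>2 * a k\<bar> = nE (\<lambda>i. (2 * a k) * unitvec k i)"
    by (simp add: nE_scale[OF E_unitvec] nE_unitvec)
  also have "(\<lambda>i. (2 * a k) * unitvec k i) = (\<lambda>i. a i - (a(k := - a k)) i)"
    by (auto simp: unitvec_def)
  also have "nE \<dots> \<le> 2 * nE a"
    using nE_diff_le[OF a flip(1)] flip(2) by simp
  finally show ?thesis by simp
qed

text \<open>Shrinking one coordinate is a convex combination of \<open>a\<close> and its reflection in that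
  coordinate.\<close>
lemma nE_shrink_coord:
  assumes a: "a \<in> E" and t: "\<bar>t\<bar> \<le> 1"
  shows "a(k := t * a k) \<in> E \<and> nE (a(k := t * a k)) \<le> nE a"
proof -
  define a' where "a' = a(k := - a k)"
  have a': "a' \<in> E" "nE a' = nE a" using E_absolute[OF a, of a'] by (auto simp: a'_def)
  have eq: "a(k := t * a k) = (\<lambda>i. ((1 + t) / 2) * a i + ((1 - t) / 2) * a' i)"
    by (auto simp: a'_def field_simps)
  have "nE (\<lambda>i. ((1 + t) / 2) * a i + ((1 - t) / 2) * a' i)
      \<le> \<bar>(1 + t) / 2\<bar> * nE a + \<bar>(1 - t) / 2\<bar> * nE a"
    using nE_triangle[OF E_scale[OF a] E_scale[OF a'(1)]] nE_scale[OF a] nE_scale[OF a'(1)] a'(2)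
    by metis
  also have "\<dots> = nE a" using t by (simp add: abs_if field_simps split: if_splits)
  finally show ?thesis unfolding eq using E_add[OF E_scale[OF a] E_scale[OF a'(1)]] by blast
qed

lemma E_solid_finite:
  "finite D \<Longrightarrow> a \<in> E \<Longrightarrow> \<forall>i. \<bar>b i\<bar> \<le> \<bar>a i\<bar> \<Longrightarrow> \<forall>i. i \<notin> D \<longrightarrow> b i = a i
   \<Longrightarrow> b \<in> E \<and> nE b \<le> nE a"
proof (induction D arbitrary: b rule: finite_induct)
  case empty
  then have "b = a" by auto
  then show ?case using empty by simp
next
  case (insert k D)
  define b' where "b' = b(k := a k)"
  have b': "b' \<in> E \<and> nE b' \<le> nE a"
    using insert.IH[OF insert.prems(1)] insert.prems by (auto simp: b'_def)
  show ?case
  proof (cases "a k = 0")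
    case True
    then have "b k = a k" using insert.prems(2) by (metis abs_le_zero_iff abs_zero)
    then have "b = b'" by (auto simp: b'_def)
    then show ?thesis using b' by simp
  next
    case False
    have "b = b'(k := (b k / a k) * b' k)" using False by (auto simp: b'_def)
    moreover have "\<bar>b k / a k\<bar> \<le> 1" using insert.prems False by (simp add: abs_divide)
    ultimately show ?thesis using nE_shrink_coord[of b' "b k / a k" k] b' by auto
  qed
qed

lemma nE_tail_small:
  assumes a: "a \<in> E" and e: "e > 0"
  shows "\<exists>J0. finite J0 \<and> (\<forall>J. finite J \<and> J0 \<subseteq> J \<longrightarrow> nE (trunc (- J) a) < e)"
proof -
  obtain J0 c where J0: "finite J0" and d: "nE (\<lambda>j. a j - (\<Sum>i\<in>J0. c i * unitvec i j)) < e"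
    using E_span_dense[OF a e] by blast
  define s where "s = (\<lambda>j. \<Sum>i\<in>J0. c i * unitvec i j)"
  have s0: "j \<notin> J0 \<Longrightarrow> s j = 0" for j unfolding s_def unitvec_def by (rule sum.neutral) auto
  have "s \<in> E" using E_finite_support[OF J0, of s] s0 by auto
  then have aS: "(\<lambda>j. a j - s j) \<in> E" using E_diff[OF a] by blast
  have "nE (trunc (- J) a) \<le> nE (\<lambda>j. a j - s j)" if J: "finite J" "J0 \<subseteq> J" for J
  proof -
    have "\<forall>i. i \<notin> J \<longrightarrow> s i = 0" using J(2) s0 by blast
    then show ?thesis using E_solid_finite[OF J(1) aS, of "trunc (- J) a"] by (auto simp: trunc_def)
  qed
  then show ?thesis using J0 d unfolding s_def by (meson le_less_trans)
qed

lemma exhausting_tails: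
  assumes a: "a \<in> E"
  obtains K where "\<And>n. finite (K n)" and "\<And>n m. n \<le> m \<Longrightarrow> K n \<subseteq> K m"
    and "\<And>n. nE (trunc (- K n) a) < inverse (Suc n)"
proof -
  have "\<forall>n. \<exists>J0. finite J0 \<and> (\<forall>J. finite J \<and> J0 \<subseteq> J \<longrightarrow> nE (trunc (- J) a) < inverse (Suc n))"
    using nE_tail_small[OF a] by simp
  then obtain J0 where J0: "\<And>n. finite (J0 n)"
    "\<And>n J. finite J \<Longrightarrow> J0 n \<subseteq> J \<Longrightarrow> nE (trunc (- J) a) < inverse (Suc n)"
    by metis
  define K where "K n = (\<Union>m\<le>n. J0 m)" for n
  show thesis
  proof
    show "finite (K n)" for n using J0(1) by (auto simp: K_def)
    show "K n \<subseteq> K m" if "n \<le> m" for n m using that by (force simp: K_def)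
    show "nE (trunc (- K n) a) < inverse (Suc n)" for n
      unfolding K_def using J0 by (intro J0(2)) auto
  qed
qed

lemma E_Cauchy_limit:
  assumes s: "\<And>n. s n \<in> E" and r: "r \<longlonglongrightarrow> 0"
    and close: "\<And>n m. n \<le> m \<Longrightarrow> nE (\<lambda>i. s m i - s n i) \<le> r n"
  shows "\<exists>c\<in>E. (\<lambda>n. nE (\<lambda>i. s n i - c i)) \<longlonglongrightarrow> 0"
proof (rule E_complete[OF s])
  fix \<epsilon> :: real assume "\<epsilon> > 0"
  then obtain M where M: "\<And>n. n \<ge> M \<Longrightarrow> r n < \<epsilon>"
    using r unfolding lim_sequentially by (metis dist_real_def abs_less_iff diff_zero)
  have "nE (\<lambda>i. s m i - s n i) < \<epsilon>" if "m \<ge> M" "n \<ge> M" for m n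
  proof (cases "n \<le> m")
    case True then show ?thesis using close M that by (meson le_less_trans)
  next
    case False
    then show ?thesis using close[of m n] M[of m] that nE_commute[OF s s, of m n] by simp
  qed
  then show "\<exists>M. \<forall>m\<ge>M. \<forall>n\<ge>M. nE (\<lambda>i. s m i - s n i) < \<epsilon>" by blast
qed

lemma nE_trunc_dominated:
  assumes a: "a \<in> E" and dom: "\<forall>i. \<bar>b i\<bar> \<le> \<bar>a i\<bar>" and K: "finite K"
  shows "nE (trunc K b) \<le> nE a + nE (trunc (- K) a)"
proof -
  define v where "v = (\<lambda>i. if i \<in> K then b i else a i)"
  have v: "v \<in> E \<and> nE v \<le> nE a"
    by (rule E_solid_finite[OF K a]) (use dom in \<open>auto simp: v_def\<close>)
  have "trunc K b = (\<lambda>i. v i - trunc (- K) a i)" by (auto simp: v_def trunc_def)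
  then have "nE (trunc K b) \<le> nE v + nE (trunc (- K) a)"
    using nE_diff_le[OF _ E_trunc_compl[OF a K]] v by simp
  then show ?thesis using v by linarith
qed

lemma nE_trunc_dominated_diff:
  assumes a: "a \<in> E" and dom: "\<forall>i. \<bar>b i\<bar> \<le> \<bar>a i\<bar>" and K': "finite K'" and KK': "K \<subseteq> K'"
  shows "nE (\<lambda>i. trunc K' b i - trunc K b i) \<le> nE (trunc (- K) a) + nE (trunc (- K') a)"
proof -
  have K: "finite K" using finite_subset[OF KK' K'] .
  define w where "w = (\<lambda>i. if i \<in> K' then trunc (- K) b i else a i)"
  have w: "w \<in> E \<and> nE w \<le> nE (trunc (- K) a)"
    by (rule E_solid_finite[OF K' E_trunc_compl[OF a K]])
      (use dom KK' in \<open>auto simp: w_def trunc_def\<close>)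
  have "(\<lambda>i. trunc K' b i - trunc K b i) = (\<lambda>i. w i - trunc (- K') a i)"
    using KK' by (auto simp: w_def trunc_def fun_eq_iff)
  then have "nE (\<lambda>i. trunc K' b i - trunc K b i) \<le> nE w + nE (trunc (- K') a)"
    using nE_diff_le[OF _ E_trunc_compl[OF a K']] w by simp
  then show ?thesis using w by linarith
qed

text \<open>The truncations of \<open>b\<close> to an exhausting sequence of finite sets are Cauchy, because
  their differences are dominated by tails of \<open>a\<close>.\<close>
lemma E_trunc_limit:
  assumes a: "a \<in> E" and dom: "\<forall>i. \<bar>b i\<bar> \<le> \<bar>a i\<bar>"
    and K: "\<And>n. finite (K n)" "\<And>n m. n \<le> m \<Longrightarrow> K n \<subseteq> K m"
    and tail: "\<And>n. nE (trunc (- K n) a) < inverse (Suc n)"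
  shows "b \<in> E" and "(\<lambda>n. nE (\<lambda>i. trunc (K n) b i - b i)) \<longlonglongrightarrow> 0"
proof -
  define s where "s n = trunc (K n) b" for n
  have s: "s n \<in> E" for n using E_trunc[OF K(1)] by (simp add: s_def)
  have inv: "(\<lambda>n. inverse (real (Suc n))) \<longlonglongrightarrow> 0" by (rule LIMSEQ_inverse_real_of_nat)
  have "nE (\<lambda>i. s m i - s n i) \<le> 2 * inverse (Suc n)" if "n \<le> m" for n m
  proof -
    have "inverse (real (Suc m)) \<le> inverse (Suc n)" using that by (simp add: field_simps)
    then show ?thesis
      using nE_trunc_dominated_diff[OF a dom K(1) K(2)[OF that]] tail[of n] tail[of m]
      unfolding s_def by linarith
  qed
  then have "\<exists>c\<in>E. (\<lambda>n. nE (\<lambda>i. s n i - c i)) \<longlonglongrightarrow> 0"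
    by (intro E_Cauchy_limit[OF s tendsto_mult_right_zero[OF inv]])
  then obtain c where c: "c \<in> E" and lim: "(\<lambda>n. nE (\<lambda>i. s n i - c i)) \<longlonglongrightarrow> 0"
    by blast
  have "b i = c i" for i
  proof -
    have "\<bar>s n i - b i\<bar> \<le> inverse (Suc n)" for n
    proof (cases "i \<in> K n")
      case False
      have "\<bar>b i\<bar> \<le> \<bar>trunc (- K n) a i\<bar>" using dom False by (simp add: trunc_def)
      also have "\<dots> \<le> nE (trunc (- K n) a)" by (rule abs_le_nE[OF E_trunc_compl[OF a K(1)]])
      finally show ?thesis using tail[of n] False by (simp add: s_def trunc_def)
    qed (simp add: s_def trunc_def)
    then have "(\<lambda>n. s n i - b i) \<longlonglongrightarrow> 0"
      by (intro Lim_null_comparison[OF _ inv]) auto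
    moreover have "(\<lambda>n. s n i - c i) \<longlonglongrightarrow> 0"
      using abs_le_nE[OF E_diff[OF s c]] by (intro Lim_null_comparison[OF _ lim]) auto
    ultimately have "(\<lambda>n. (s n i - b i) - (s n i - c i)) \<longlonglongrightarrow> 0 - 0"
      by (rule tendsto_diff)
    then show "b i = c i" by (simp add: LIMSEQ_const_iff)
  qed
  then have "b = c" by blast
  with c lim show "b \<in> E" "(\<lambda>n. nE (\<lambda>i. trunc (K n) b i - b i)) \<longlonglongrightarrow> 0"
    by (simp_all add: s_def)
qed

lemma E_solid:
  assumes a: "a \<in> E" and dom: "\<forall>i. \<bar>b i\<bar> \<le> \<bar>a i\<bar>"
  shows "b \<in> E \<and> nE b \<le> nE a"
proof -
  obtain K where K: "\<And>n. finite (K n)" "\<And>n m. n \<le> m \<Longrightarrow> K n \<subseteq> K m"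
    and tail: "\<And>n. nE (trunc (- K n) a) < inverse (Suc n)"
    using exhausting_tails[OF a] by blast
  note b = E_trunc_limit[OF a dom K tail]
  have "nE b \<le> nE a + (inverse (Suc n) + nE (\<lambda>i. trunc (K n) b i - b i))" for n
  proof -
    have "nE (\<lambda>i. trunc (K n) b i + (b i - trunc (K n) b i))
        \<le> nE (trunc (K n) b) + nE (\<lambda>i. b i - trunc (K n) b i)"
      by (rule nE_triangle[OF E_trunc[OF K(1)] E_diff[OF b(1) E_trunc[OF K(1)]]])
    then have "nE b \<le> nE (trunc (K n) b) + nE (\<lambda>i. b i - trunc (K n) b i)" by simp
    also have "nE (\<lambda>i. b i - trunc (K n) b i) = nE (\<lambda>i. trunc (K n) b i - b i)"
      by (rule nE_commute[OF b(1) E_trunc[OF K(1)]])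
    finally show ?thesis using nE_trunc_dominated[OF a dom K(1)[of n]] tail[of n] by linarith
  qed
  moreover have "(\<lambda>n. nE a + (inverse (Suc n) + nE (\<lambda>i. trunc (K n) b i - b i))) \<longlonglongrightarrow> nE a + (0 + 0)"
    by (intro tendsto_add tendsto_const LIMSEQ_inverse_real_of_nat b(2))
  ultimately have "nE b \<le> nE a" by (intro LIMSEQ_le_const) auto
  with b(1) show ?thesis by blast
qed

end

section \<open>\<open>E\<close>-sums\<close>

locale esum_space = abs_seq_space E nE
  for E :: "('i \<Rightarrow> real) set" and nE :: "('i \<Rightarrow> real) \<Rightarrow> real" +
  fixes sc :: "'k::real_normed_field \<Rightarrow> 'a::banach \<Rightarrow> 'a" and X :: "'i \<Rightarrow> 'a set"
  assumes sc_of_real: "\<And>r x. sc (of_real r) x = r *\<^sub>R x"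
    and norm_sc: "\<And>c x. norm (sc c x) = norm c * norm x"
    and banach_family: "banach_family sc X"
begin

abbreviation Z :: "('i \<Rightarrow> 'a) set" where "Z \<equiv> esum X E"
abbreviation N :: "('i \<Rightarrow> 'a) \<Rightarrow> real" where "N \<equiv> esum_norm nE"
abbreviation Zpart :: "'i set \<Rightarrow> ('i \<Rightarrow> 'a) set" where "Zpart J \<equiv> esum_part X E J"

lemma X_zero: "0 \<in> X i"
  and X_add: "x \<in> X i \<Longrightarrow> y \<in> X i \<Longrightarrow> x + y \<in> X i"
  and X_sc: "x \<in> X i \<Longrightarrow> sc c x \<in> X i"
  using banach_family unfolding banach_family_def by blast+

lemma X_uminus: "x \<in> X i \<Longrightarrow> - x \<in> X i"
  using X_sc[of x i "of_real (-1)"] sc_of_real[of "-1" x] by simp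

lemma sc_zero: "sc c 0 = 0"
  using norm_sc[of c 0] by simp

lemma esum_dominated:
  assumes "a \<in> E" "\<forall>i. y i \<in> X i" "\<forall>i. norm (y i) \<le> \<bar>a i\<bar>"
  shows "y \<in> Z \<and> N y \<le> nE a"
  using E_solid[of a "\<lambda>i. norm (y i)"] assms by (simp add: esum_def esum_norm_def)

lemma esum_mono:
  assumes "x \<in> Z" "\<forall>i. y i \<in> X i" "\<forall>i. norm (y i) \<le> norm (x i)"
  shows "y \<in> Z \<and> N y \<le> N x"
  using esum_dominated[of "\<lambda>i. norm (x i)" y] assms by (simp add: esum_def esum_norm_def)

lemma esum_zero: "(\<lambda>i. 0) \<in> Z"
  using E_zero X_zero by (simp add: esum_def)

lemma N_zero: "N (\<lambda>i. 0) = 0"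
  using nE_zero by (simp add: esum_norm_def)

lemma esum_add:
  assumes x: "x \<in> Z" and y: "y \<in> Z"
  shows "(\<lambda>i. x i + y i) \<in> Z \<and> N (\<lambda>i. x i + y i) \<le> N x + N y"
proof -
  have a: "(\<lambda>i. norm (x i) + norm (y i)) \<in> E" using E_add x y by (simp add: esum_def)
  have "(\<lambda>i. x i + y i) \<in> Z \<and> N (\<lambda>i. x i + y i) \<le> nE (\<lambda>i. norm (x i) + norm (y i))"
    by (rule esum_dominated[OF a]) (use x y X_add norm_triangle_ineq in \<open>auto simp: esum_def\<close>)
  moreover have "nE (\<lambda>i. norm (x i) + norm (y i)) \<le> N x + N y"
    using nE_triangle x y by (simp add: esum_def esum_norm_def)
  ultimately show ?thesis by linarith
qed

lemma esum_vsc: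
  assumes x: "x \<in> Z" shows "vsc sc c x \<in> Z \<and> N (vsc sc c x) = norm c * N x"
proof -
  have "(\<lambda>i. norm (vsc sc c x i)) = (\<lambda>i. norm c * norm (x i))" by (simp add: vsc_def norm_sc)
  then show ?thesis using x E_scale nE_scale X_sc by (simp add: esum_def esum_norm_def vsc_def)
qed

lemma esum_uminus: "x \<in> Z \<Longrightarrow> (\<lambda>i. - x i) \<in> Z \<and> N (\<lambda>i. - x i) = N x"
  using X_uminus by (simp add: esum_def esum_norm_def)

lemma esum_diff:
  assumes "x \<in> Z" "y \<in> Z"
  shows "(\<lambda>i. x i - y i) \<in> Z \<and> N (\<lambda>i. x i - y i) \<le> N x + N y"
  using esum_add[OF assms(1) esum_uminus[OF assms(2), THEN conjunct1]] esum_uminus[OF assms(2)]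
  by simp

lemma N_commute: "N (\<lambda>i. x i - y i) = N (\<lambda>i. y i - x i)"
  by (simp add: esum_norm_def norm_minus_commute)

lemma N_diff_triangle:
  assumes "x \<in> Z" "y \<in> Z" "z \<in> Z"
  shows "N (\<lambda>i. x i - z i) \<le> N (\<lambda>i. x i - y i) + N (\<lambda>i. y i - z i)"
  using esum_add[OF esum_diff[OF assms(1,2), THEN conjunct1]
      esum_diff[OF assms(2,3), THEN conjunct1]]
  by simp

lemma N_reverse_triangle:
  assumes "x \<in> Z" "y \<in> Z" shows "\<bar>N x - N y\<bar> \<le> N (\<lambda>i. x i - y i)"
  using N_diff_triangle[OF assms(1,2) esum_zero] N_diff_triangle[OF assms(2,1) esum_zero]
    N_commute[of x y] by simp

lemma N_nonneg: "x \<in> Z \<Longrightarrow> 0 \<le> N x"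
  using nE_nonneg by (simp add: esum_def esum_norm_def)

lemma norm_le_N: "x \<in> Z \<Longrightarrow> norm (x i) \<le> N x"
  using abs_le_nE[of "\<lambda>i. norm (x i)" i] by (simp add: esum_def esum_norm_def)

lemma N_eq_0_iff: "x \<in> Z \<Longrightarrow> N x = 0 \<longleftrightarrow> x = (\<lambda>i. 0)"
  using norm_le_N[of x] N_zero by (fastforce simp: fun_eq_iff)

lemma esum_part_subset: "Zpart J \<subseteq> Z"
  by (auto simp: esum_part_def)

lemma trunc_mem_esum_part:
  assumes x: "x \<in> Z" shows "trunc J x \<in> Zpart J \<and> N (trunc J x) \<le> N x"
proof -
  have "trunc J x \<in> Z \<and> N (trunc J x) \<le> N x"
    by (rule esum_mono[OF x]) (use x X_zero in \<open>auto simp: trunc_def esum_def\<close>)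
  then show ?thesis by (auto simp: esum_part_def trunc_def)
qed

lemma trunc_esum_part: "x \<in> Zpart J \<Longrightarrow> trunc J x = x"
  by (auto simp: esum_part_def trunc_def)

lemma N_tail_small:
  assumes x: "x \<in> Z" and e: "e > 0"
  shows "\<exists>J0. finite J0 \<and> (\<forall>J. finite J \<and> J0 \<subseteq> J \<longrightarrow> N (trunc (- J) x) < e)"
proof -
  have "(\<lambda>i. norm (trunc (- J) x i)) = trunc (- J) (\<lambda>i. norm (x i))" for J
    by (auto simp: trunc_def)
  then show ?thesis using nE_tail_small[of "\<lambda>i. norm (x i)" e] x e
    by (simp add: esum_def esum_norm_def)
qed

lemma esum_subspace: "lin_subspace sc Z Z"
  unfolding lin_subspace_def using esum_zero esum_add esum_vsc by auto

lemma esum_part_subspace: "lin_subspace sc Z (Zpart J)"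
  unfolding lin_subspace_def esum_part_def
  using esum_zero esum_add esum_vsc by (auto simp: vsc_def sc_zero)

lemma esum_part_closed: "norm_closed N Z (Zpart J)"
  unfolding norm_closed_def
proof (intro allI impI)
  fix s v assume h: "(\<forall>n. s n \<in> Zpart J) \<and> v \<in> Z \<and> (\<lambda>n. N (\<lambda>i. s n i - v i)) \<longlonglongrightarrow> 0"
  have "v i = 0" if i: "i \<notin> J" for i
  proof -
    have "norm (v i) \<le> N (\<lambda>i. s n i - v i)" for n
      using norm_le_N[OF esum_diff[of "s n" v, THEN conjunct1], of i] h i
      by (auto simp: esum_part_def)
    then have "norm (v i) \<le> 0" using h by (intro LIMSEQ_le_const[of _ 0]) auto
    then show ?thesis by simp
  qed
  then show "v \<in> Zpart J" using h by (auto simp: esum_part_def)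
qed

lemma esum_nz_subspace: "Z \<noteq> {\<lambda>i. 0} \<Longrightarrow> Z \<in> nz_subspaces sc N Z"
  unfolding nz_subspaces_def closed_subspaces_def norm_closed_def using esum_subspace by auto

lemma esum_part_nz_subspace: "Zpart J \<noteq> {\<lambda>i. 0} \<Longrightarrow> Zpart J \<in> nz_subspaces sc N Z"
  unfolding nz_subspaces_def closed_subspaces_def
  using esum_part_subspace esum_part_closed by auto

section \<open>Bounded functionals on subspaces of an \<open>E\<close>-sum\<close>

lemma bdd_functional_add:
    "bdd_functional sc N U f \<Longrightarrow> x \<in> U \<Longrightarrow> y \<in> U \<Longrightarrow> f (\<lambda>i. x i + y i) = f x + f y"
  and bdd_functional_vsc: "bdd_functional sc N U f \<Longrightarrow> x \<in> U \<Longrightarrow> f (vsc sc c x) = c * f x"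
  and bdd_functional_outside: "bdd_functional sc N U f \<Longrightarrow> v \<notin> U \<Longrightarrow> f v = 0"
  by (simp_all add: bdd_functional_def)

lemma bdd_functional_zero:
  assumes "lin_subspace sc Z U" "bdd_functional sc N U f" shows "f (\<lambda>i. 0) = 0"
  using bdd_functional_add[OF assms(2), of "\<lambda>i. 0" "\<lambda>i. 0"] assms(1)
  by (simp add: lin_subspace_def)

lemma nball_zero: "lin_subspace sc Z U \<Longrightarrow> (\<lambda>i. 0) \<in> nball N U"
  using N_zero by (simp add: nball_def lin_subspace_def)

lemma bdd_above_functional:
  assumes U: "lin_subspace sc Z U" and f: "bdd_functional sc N U f"
  shows "bdd_above ((\<lambda>x. norm (f x)) ` nball N U)"
proof -
  obtain C where C: "\<forall>x\<in>U. norm (f x) \<le> C * N x" using f by (auto simp: bdd_functional_def)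
  have "norm (f x) \<le> \<bar>C\<bar>" if x: "x \<in> nball N U" for x
  proof -
    have "x \<in> Z" "N x \<le> 1" using x U by (auto simp: nball_def lin_subspace_def)
    then have "C * N x \<le> \<bar>C\<bar>" using N_nonneg[of x] by (metis abs_ge_self mult_left_le order_trans
        abs_ge_zero mult_right_mono)
    then show ?thesis using C x by (force simp: nball_def)
  qed
  then show ?thesis by (rule bdd_aboveI2)
qed

lemma norm_le_dnorm:
  "lin_subspace sc Z U \<Longrightarrow> bdd_functional sc N U f \<Longrightarrow> x \<in> nball N U \<Longrightarrow> norm (f x) \<le> dnorm N U f"
  unfolding dnorm_def by (rule cSUP_upper[OF _ bdd_above_functional])

lemma dnorm_le:
  "lin_subspace sc Z U \<Longrightarrow> (\<And>x. x \<in> nball N U \<Longrightarrow> norm (f x) \<le> B) \<Longrightarrow> dnorm N U f \<le> B"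
  unfolding dnorm_def by (rule cSUP_least) (use nball_zero in auto)

lemma dnorm_nonneg: "lin_subspace sc Z U \<Longrightarrow> bdd_functional sc N U f \<Longrightarrow> 0 \<le> dnorm N U f"
  using norm_le_dnorm[OF _ _ nball_zero] by (metis norm_ge_zero order_trans)

lemma exists_almost_norming:
  assumes U: "lin_subspace sc Z U" and f: "f \<in> dsphere sc N U" and e: "e > 0"
  shows "\<exists>x\<in>nball N U. 1 - e < norm (f x)"
proof -
  have fb: "bdd_functional sc N U f" and "dnorm N U f = 1" using f by (auto simp: dsphere_def)
  then have "1 - e < (SUP x\<in>nball N U. norm (f x))" using e by (simp add: dnorm_def)
  then show ?thesis
    using less_cSUP_iff[OF _ bdd_above_functional[OF U fb]] nball_zero[OF U] by blast
qed

lemma norm_apply_le: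
  assumes U: "lin_subspace sc Z U" and f: "bdd_functional sc N U f" and x: "x \<in> U"
  shows "norm (f x) \<le> dnorm N U f * N x"
proof (cases "N x = 0")
  case True
  then have "x = (\<lambda>i. 0)" using N_eq_0_iff x U by (auto simp: lin_subspace_def)
  then show ?thesis using bdd_functional_zero[OF U f] True by simp
next
  case False
  have xZ: "x \<in> Z" using x U by (auto simp: lin_subspace_def)
  then have pos: "N x > 0" using False N_nonneg[OF xZ] by simp
  define y where "y = vsc sc (of_real (1 / N x)) x"
  have "y \<in> U" using x U by (simp add: y_def lin_subspace_def)
  moreover have "N y = 1"
    using esum_vsc[OF xZ, of "of_real (1 / N x)"] pos by (simp add: y_def norm_divide)
  ultimately have "norm (f y) \<le> dnorm N U f" by (intro norm_le_dnorm[OF U f]) (simp add: nball_def)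
  moreover have "norm (f y) = norm (f x) / N x"
    unfolding y_def bdd_functional_vsc[OF f x] using pos by (simp add: norm_mult norm_divide)
  ultimately show ?thesis using pos by (simp add: field_simps)
qed

lemma bdd_functional_scale:
  assumes f: "bdd_functional sc N U f" shows "bdd_functional sc N U (\<lambda>v. a * f v)"
proof -
  obtain C where "\<forall>x\<in>U. norm (f x) \<le> C * N x" using f by (auto simp: bdd_functional_def)
  then have "\<forall>x\<in>U. norm (a * f x) \<le> (norm a * C) * N x"
    by (simp add: norm_mult mult.assoc mult_left_mono)
  moreover have "(\<forall>x\<in>U. \<forall>y\<in>U. a * f (\<lambda>i. x i + y i) = a * f x + a * f y) \<and>
      (\<forall>c. \<forall>x\<in>U. a * f (vsc sc c x) = c * (a * f x)) \<and> (\<forall>v. v \<notin> U \<longrightarrow> a * f v = 0)"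
    using f by (simp add: bdd_functional_def algebra_simps)
  ultimately show ?thesis unfolding bdd_functional_def by blast
qed

lemma dnorm_scale:
  assumes U: "lin_subspace sc Z U" and f: "bdd_functional sc N U f" and t: "t \<ge> 0"
  shows "dnorm N U (\<lambda>v. of_real t * f v) = t * dnorm N U f"
proof (rule antisym)
  show "dnorm N U (\<lambda>v. of_real t * f v) \<le> t * dnorm N U f"
    by (rule dnorm_le[OF U])
      (use norm_le_dnorm[OF U f] t in \<open>auto simp: norm_mult intro: mult_left_mono\<close>)
  show "t * dnorm N U f \<le> dnorm N U (\<lambda>v. of_real t * f v)"
  proof (cases "t = 0")
    case True then show ?thesis using dnorm_nonneg[OF U bdd_functional_scale[OF f, of 0]] by simp
  next
    case False
    then have tp: "t > 0" using t by simp
    have "dnorm N U f \<le> dnorm N U (\<lambda>v. of_real t * f v) / t"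
      using norm_le_dnorm[OF U bdd_functional_scale[OF f, of "of_real t"]] tp
      by (intro dnorm_le[OF U]) (simp add: norm_mult field_simps)
    then show ?thesis using tp by (simp add: field_simps)
  qed
qed

lemma restr_dball:
  assumes U: "lin_subspace sc Z U" and f: "f \<in> dball sc N Z"
  shows "restr U f \<in> dball sc N U"
proof -
  have UZ: "U \<subseteq> Z" using U by (simp add: lin_subspace_def)
  have fb: "bdd_functional sc N Z f" and f1: "dnorm N Z f \<le> 1" using f by (auto simp: dball_def)
  have "\<forall>x\<in>U. norm (restr U f x) \<le> dnorm N Z f * N x"
    using norm_apply_le[OF esum_subspace fb] UZ by (auto simp: restr_def)
  then have bfU: "bdd_functional sc N U (restr U f)"
    using U UZ fb unfolding bdd_functional_def lin_subspace_def restr_def by (auto simp: subset_iff)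
  have "dnorm N U (restr U f) \<le> 1"
  proof (rule dnorm_le[OF U])
    fix x assume x: "x \<in> nball N U"
    then have "norm (f x) \<le> dnorm N Z f"
      using UZ by (intro norm_le_dnorm[OF esum_subspace fb]) (auto simp: nball_def)
    then show "norm (restr U f x) \<le> 1" using x f1 by (auto simp: restr_def nball_def)
  qed
  then show ?thesis using bfU by (simp add: dball_def)
qed

lemma dball_norm_le: "f \<in> dball sc N Z \<Longrightarrow> x \<in> Z \<Longrightarrow> norm (f x) \<le> N x"
  using norm_apply_le[OF esum_subspace, of f x] dnorm_nonneg[OF esum_subspace, of f] N_nonneg[of x]
  by (auto simp: dball_def intro: order_trans mult_left_le_one_le)

section \<open>Approximation by finite sums\<close>

lemma dnorm_restr_trunc_ge:
  assumes f: "f \<in> dball sc N Z" and x: "x \<in> nball N Z"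
  shows "norm (f x) - N (trunc (- J) x) \<le> dnorm N (Zpart J) (restr (Zpart J) f)"
proof -
  have xZ: "x \<in> Z" and x1: "N x \<le> 1" using x by (auto simp: nball_def)
  have fb: "bdd_functional sc N Z f" using f by (auto simp: dball_def)
  have head: "trunc J x \<in> Zpart J" "N (trunc J x) \<le> N x" using trunc_mem_esum_part[OF xZ] by auto
  then have headZ: "trunc J x \<in> Z" using esum_part_subset by blast
  have tailZ: "trunc (- J) x \<in> Z" using esum_diff[OF xZ headZ] diff_trunc_eq by metis
  have "(\<lambda>i. trunc J x i + trunc (- J) x i) = x" by (auto simp: trunc_def)
  then have "f x = f (trunc J x) + f (trunc (- J) x)"
    using bdd_functional_add[OF fb headZ tailZ] by simp
  then have "norm (f x) \<le> norm (f (trunc J x)) + norm (f (trunc (- J) x))"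
    by (simp add: norm_triangle_ineq)
  then have "norm (f x) \<le> norm (f (trunc J x)) + N (trunc (- J) x)"
    using dball_norm_le[OF f tailZ] by linarith
  moreover have "norm (f (trunc J x)) \<le> dnorm N (Zpart J) (restr (Zpart J) f)"
    using norm_le_dnorm[of "Zpart J" "restr (Zpart J) f" "trunc J x"] esum_part_subspace
      restr_dball[OF esum_part_subspace f] head x1
    by (simp add: dball_def restr_def nball_def)
  ultimately show ?thesis by linarith
qed

text \<open>Composing with the norm-one projection onto \<open>Zpart J\<close> replaces Hahn--Banach.\<close>
definition extend :: "'i set \<Rightarrow> (('i \<Rightarrow> 'a) \<Rightarrow> 'k) \<Rightarrow> ('i \<Rightarrow> 'a) \<Rightarrow> 'k" where
  "extend J g = (\<lambda>v. if v \<in> Z then g (trunc J v) else 0)"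

lemma restr_extend: "bdd_functional sc N (Zpart J) g \<Longrightarrow> restr (Zpart J) (extend J g) = g"
  using esum_part_subset trunc_esum_part bdd_functional_outside
  by (fastforce simp: restr_def extend_def)

lemma extend_dsphere:
  assumes g: "g \<in> dsphere sc N (Zpart J)"
  shows "extend J g \<in> dsphere sc N Z"
proof -
  have gb: "bdd_functional sc N (Zpart J) g" and g1: "dnorm N (Zpart J) g = 1"
    using g by (auto simp: dsphere_def)
  have head: "x \<in> Z \<Longrightarrow> trunc J x \<in> Zpart J \<and> N (trunc J x) \<le> N x" for x
    using trunc_mem_esum_part by blast
  have trunc_add: "trunc J (\<lambda>i. x i + y i) = (\<lambda>i. trunc J x i + trunc J y i)" for x y :: "'i \<Rightarrow> 'a"
    by (simp add: trunc_def fun_eq_iff)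
  have trunc_vsc: "trunc J (vsc sc c x) = vsc sc c (trunc J x)" for c x
    by (auto simp: trunc_def vsc_def sc_zero)
  have bound: "norm (extend J g x) \<le> N x" if x: "x \<in> Z" for x
  proof -
    have "norm (g (trunc J x)) \<le> N (trunc J x)"
      using norm_apply_le[OF esum_part_subspace gb, of "trunc J x"] head[OF x] g1 by simp
    then show ?thesis using head[OF x] x by (simp add: extend_def)
  qed
  have bfZ: "bdd_functional sc N Z (extend J g)"
    unfolding bdd_functional_def
  proof (intro conjI ballI allI impI)
    show "extend J g (\<lambda>i. x i + y i) = extend J g x + extend J g y" if "x \<in> Z" "y \<in> Z" for x y
      using that esum_add bdd_functional_add[OF gb] head by (simp add: extend_def trunc_add)
    show "extend J g (vsc sc c x) = c * extend J g x" if "x \<in> Z" for c x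
      using that esum_vsc bdd_functional_vsc[OF gb] head by (simp add: extend_def trunc_vsc)
    show "extend J g v = 0" if "v \<notin> Z" for v using that by (simp add: extend_def)
    show "\<exists>C. \<forall>x\<in>Z. norm (extend J g x) \<le> C * N x" using bound by (intro exI[of _ 1]) simp
  qed
  have "dnorm N Z (extend J g) \<le> 1"
    using bound by (intro dnorm_le[OF esum_subspace]) (force simp: nball_def)
  moreover have "dnorm N (Zpart J) g \<le> dnorm N Z (extend J g)"
  proof (rule dnorm_le[OF esum_part_subspace])
    fix x assume x: "x \<in> nball N (Zpart J)"
    then have "x \<in> nball N Z" using esum_part_subset by (auto simp: nball_def)
    moreover have "extend J g x = g x"
      using x esum_part_subset trunc_esum_part by (auto simp: extend_def nball_def)
    ultimately show "norm (g x) \<le> dnorm N Z (extend J g)"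
      using norm_le_dnorm[OF esum_subspace bfZ] by metis
  qed
  ultimately show ?thesis using g1 bfZ by (simp add: dsphere_def)
qed

lemma normalized_functional:
  assumes U: "lin_subspace sc Z U" and f: "f \<in> dball sc N U" and pos: "dnorm N U f > 0"
  defines "g \<equiv> (\<lambda>v. of_real (1 / dnorm N U f) * f v)"
  shows "g \<in> dsphere sc N U" and "dnorm N U (\<lambda>v. f v - g v) = 1 - dnorm N U f"
proof -
  define d where "d = dnorm N U f"
  have fb: "bdd_functional sc N U f" and d1: "d \<le> 1" using f by (auto simp: dball_def d_def)
  have "dnorm N U g = (1 / d) * d"
    using dnorm_scale[OF U fb, of "1 / d"] pos by (simp add: g_def d_def)
  moreover have "bdd_functional sc N U g" unfolding g_def by (rule bdd_functional_scale[OF fb])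
  ultimately show "g \<in> dsphere sc N U" using pos by (simp add: dsphere_def d_def)
  have "norm (f x - g x) = norm (of_real (1 / d - 1) * f x)" for x
    by (simp add: g_def d_def norm_minus_commute algebra_simps)
  then have "dnorm N U (\<lambda>v. f v - g v) = dnorm N U (\<lambda>v. of_real (1 / d - 1) * f v)"
    by (simp add: dnorm_def)
  also have "\<dots> = (1 / d - 1) * d"
    using dnorm_scale[OF U fb, of "1 / d - 1"] pos d1 by (simp add: d_def field_simps)
  also have "\<dots> = 1 - d" using pos by (simp add: d_def field_simps)
  finally show "dnorm N U (\<lambda>v. f v - g v) = 1 - dnorm N U f" by (simp add: d_def)
qed

lemma normalized_vector_near:
  assumes U: "lin_subspace sc Z U" and x: "x \<in> nsphere N Z" and y: "y \<in> U"
    and close: "N (\<lambda>i. x i - y i) \<le> t" and t: "t < 1"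
  shows "\<exists>z\<in>nsphere N U. N (\<lambda>i. x i - z i) \<le> 2 * t"
proof -
  have xZ: "x \<in> Z" and x1: "N x = 1" using x by (auto simp: nsphere_def)
  have yZ: "y \<in> Z" using y U by (auto simp: lin_subspace_def)
  have dist1: "\<bar>N y - 1\<bar> \<le> t"
    using N_reverse_triangle[OF yZ xZ] N_commute[of x y] close x1 by simp
  then have pos: "N y > 0" using t by linarith
  define z where "z = vsc sc (of_real (1 / N y)) y"
  have "(\<lambda>i. y i - z i) = vsc sc (of_real (1 - 1 / N y)) y"
    unfolding z_def vsc_def sc_of_real by (simp add: algebra_simps)
  then have "N (\<lambda>i. y i - z i) = \<bar>1 - 1 / N y\<bar> * N y"
    using esum_vsc[OF yZ, of "of_real (1 - 1 / N y)"] by (simp only: norm_of_real)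
  also have "\<dots> = \<bar>(1 - 1 / N y) * N y\<bar>" by (simp only: abs_mult abs_of_pos[OF pos])
  also have "\<dots> = \<bar>N y - 1\<bar>" using pos by (simp add: left_diff_distrib)
  finally have yz: "N (\<lambda>i. y i - z i) \<le> t" using dist1 by simp
  have zU: "z \<in> U" using U y by (simp add: z_def lin_subspace_def)
  then have "N (\<lambda>i. x i - z i) \<le> 2 * t"
    using N_diff_triangle[OF xZ yZ, of z] U close yz by (auto simp: lin_subspace_def)
  moreover have "N z = 1" using esum_vsc[OF yZ] pos by (simp add: z_def norm_divide)
  ultimately show ?thesis using zU by (auto simp: nsphere_def)
qed

lemma exists_finite_part_near:
  assumes W: "finite W" "W \<subseteq> Z" and s: "s > 0"
  obtains J where "finite J" "i0 \<in> J" "\<And>w. w \<in> W \<Longrightarrow> N (trunc (- J) w) < s"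
proof -
  have "\<forall>w\<in>W. \<exists>J0. finite J0 \<and> (\<forall>J. finite J \<and> J0 \<subseteq> J \<longrightarrow> N (trunc (- J) w) < s)"
    using N_tail_small W s by blast
  then obtain J0 where J0: "\<And>w. w \<in> W \<Longrightarrow> finite (J0 w)"
    "\<And>w J. w \<in> W \<Longrightarrow> finite J \<Longrightarrow> J0 w \<subseteq> J \<Longrightarrow> N (trunc (- J) w) < s"
    by metis
  define J where "J = insert i0 (\<Union>(J0 ` W))"
  have "finite J" using J0(1) W(1) by (simp add: J_def)
  moreover have "N (trunc (- J) w) < s" if "w \<in> W" for w
    using J0(2)[OF that \<open>finite J\<close>] that by (auto simp: J_def)
  ultimately show thesis using that[of J] by (simp add: J_def)
qed

lemma trunc_normalized_near:
  assumes x: "x \<in> nsphere N Z" and tail: "N (trunc (- J) x) \<le> t" and t: "t < 1"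
  shows "\<exists>z\<in>nsphere N (Zpart J). N (\<lambda>i. x i - z i) \<le> 2 * t"
proof (rule normalized_vector_near[OF esum_part_subspace x _ _ t])
  show "trunc J x \<in> Zpart J" using trunc_mem_esum_part x by (simp add: nsphere_def)
  show "N (\<lambda>i. x i - trunc J x i) \<le> t" using tail by (simp add: diff_trunc_eq)
qed

lemma restr_normalized_near:
  assumes f: "f \<in> dsphere sc N Z" and x: "x \<in> nball N Z" and \<theta>: "0 < \<theta>" "\<theta> \<le> 1"
    and norming: "1 - \<theta> / 2 < norm (f x)" and tail: "N (trunc (- J) x) < \<theta> / 2"
  shows "\<exists>h\<in>dsphere sc N (Zpart J). dnorm N (Zpart J) (\<lambda>v. restr (Zpart J) f v - h v) \<le> \<theta>"
proof -
  have fb: "f \<in> dball sc N Z" using f by (auto simp: dsphere_def dball_def)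
  define d where "d = dnorm N (Zpart J) (restr (Zpart J) f)"
  have "1 - \<theta> < d" using dnorm_restr_trunc_ge[OF fb x, of J] norming tail by (simp add: d_def)
  then have "d > 0" using \<theta> by linarith
  then show ?thesis
    using normalized_functional[OF esum_part_subspace restr_dball[OF esum_part_subspace fb]]
      \<open>1 - \<theta> < d\<close>
    unfolding d_def by (intro bexI) auto
qed

lemma finite_part_approximation:
  assumes nonzero: "Z \<noteq> {\<lambda>i. 0}"
    and xs: "xs \<in> lists (nsphere N Z)" and fs: "fs \<in> lists (dsphere sc N Z)"
    and \<delta>: "\<delta> > 0" and \<theta>: "\<theta> > 0"
  obtains J where "finite J" "J \<noteq> {}" "Zpart J \<in> nz_subspaces sc N Z"
    and "\<exists>zs\<in>lists (nsphere N (Zpart J)). list_all2 (\<lambda>x z. N (\<lambda>i. x i - z i) \<le> \<delta>) xs zs"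
    and "\<exists>hs\<in>lists (dsphere sc N (Zpart J)).
           list_all2 (\<lambda>f h. dnorm N (Zpart J) (\<lambda>v. f v - h v) \<le> \<theta>) (map (restr (Zpart J)) fs) hs"
proof -
  define \<theta>' where "\<theta>' = min \<theta> 1"
  define s where "s = min (min (\<delta> / 2) (1 / 2)) (\<theta>' / 2)"
  have \<theta>': "0 < \<theta>'" "\<theta>' \<le> \<theta>" "\<theta>' \<le> 1" using \<theta> by (auto simp: \<theta>'_def)
  have s: "0 < s" "2 * s \<le> \<delta>" "s < 1" "s \<le> \<theta>' / 2" using \<delta> \<theta>' by (auto simp: s_def)
  have "\<forall>f\<in>set fs. \<exists>x\<in>nball N Z. 1 - \<theta>' / 2 < norm (f x)"
    using exists_almost_norming[OF esum_subspace] fs \<theta>' by (auto simp: in_lists_conv_set)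
  then obtain xf where xf: "\<And>f. f \<in> set fs \<Longrightarrow> xf f \<in> nball N Z \<and> 1 - \<theta>' / 2 < norm (f (xf f))"
    by metis
  obtain z0 where z0: "z0 \<in> Z" "z0 \<noteq> (\<lambda>i. 0)" using nonzero esum_zero by blast
  then obtain i0 where i0: "z0 i0 \<noteq> 0" by auto
  have "finite (set xs \<union> xf ` set fs)" "set xs \<union> xf ` set fs \<subseteq> Z"
    using xs xf by (auto simp: nsphere_def nball_def)
  then obtain J where J: "finite J" "i0 \<in> J"
    and near: "\<And>w. w \<in> set xs \<union> xf ` set fs \<Longrightarrow> N (trunc (- J) w) < s"
    using exists_finite_part_near s(1) by metis
  have "trunc J z0 \<in> Zpart J" "trunc J z0 \<noteq> (\<lambda>i. 0)"
    using trunc_mem_esum_part[OF z0(1)] i0 J(2) by (auto simp: trunc_def fun_eq_iff)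
  then have "Zpart J \<noteq> {\<lambda>i. 0}" by blast
  show thesis
  proof (rule that[OF J(1) _ esum_part_nz_subspace])
    show "J \<noteq> {}" "Zpart J \<noteq> {\<lambda>i. 0}" using J(2) \<open>Zpart J \<noteq> {\<lambda>i. 0}\<close> by auto
    have "\<exists>z\<in>nsphere N (Zpart J). N (\<lambda>i. x i - z i) \<le> \<delta>" if "x \<in> set xs" for x
      using trunc_normalized_near[of x J s] near[of x] that xs s by (force simp: in_lists_conv_set)
    then show "\<exists>zs\<in>lists (nsphere N (Zpart J)). list_all2 (\<lambda>x z. N (\<lambda>i. x i - z i) \<le> \<delta>) xs zs"
      by (rule list_all2_choice)
    have "\<exists>h\<in>dsphere sc N (Zpart J). dnorm N (Zpart J) (\<lambda>v. restr (Zpart J) f v - h v) \<le> \<theta>"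
      if f: "f \<in> set fs" for f
    proof -
      have "\<exists>h\<in>dsphere sc N (Zpart J). dnorm N (Zpart J) (\<lambda>v. restr (Zpart J) f v - h v) \<le> \<theta>'"
        using restr_normalized_near[of f "xf f" \<theta>' J] xf[OF f] near[of "xf f"] f fs \<theta>' s
        by (force simp: in_lists_conv_set)
      then show ?thesis using \<theta>' by force
    qed
    then show "\<exists>hs\<in>lists (dsphere sc N (Zpart J)).
        list_all2 (\<lambda>f h. dnorm N (Zpart J) (\<lambda>v. f v - h v) \<le> \<theta>) (map (restr (Zpart J)) fs) hs"
      unfolding list_all2_map1 by (rule list_all2_choice)
  qed
qed

end

lemma test_family_charD:
  assumes "test_family sc N Z Ecl F" and "U \<in> nz_subspaces sc N Z"
  shows "Ecl U \<longleftrightarrow> (\<forall>\<epsilon>>0. \<forall>xs\<in>lists (nsphere N U). \<forall>fs\<in>lists (dsphere sc N U).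
           \<exists>ys\<in>lists (nsphere N U). \<exists>gs\<in>lists (dsphere sc N U). F \<epsilon> U xs fs ys gs \<le> \<epsilon>)"
  by (rule bspec[OF assms(1)[unfolded test_family_def, THEN conjunct1] assms(2)])

context esum_space
begin

lemma test_family_transfer:
  fixes F :: "real \<Rightarrow> ('i \<Rightarrow> 'a) set \<Rightarrow> ('i \<Rightarrow> 'a) list \<Rightarrow> (('i \<Rightarrow> 'a) \<Rightarrow> 'k) list
              \<Rightarrow> ('i \<Rightarrow> 'a) list \<Rightarrow> (('i \<Rightarrow> 'a) \<Rightarrow> 'k) list \<Rightarrow> real"
  assumes tf: "test_family sc N Z Ecl F" and \<epsilon>: "\<epsilon> > 0"
    and xs: "xs \<in> lists (nball N Z)" and fs: "fs \<in> lists (dball sc N Z)"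
  obtains \<delta> \<theta> \<epsilon>' where "\<delta> > 0" "\<theta> > 0" "\<epsilon>' > 0"
    and "\<And>U zs hs ys gs. U \<in> nz_subspaces sc N Z \<Longrightarrow>
           zs \<in> lists (nball N U) \<Longrightarrow> list_all2 (\<lambda>x z. N (\<lambda>i. x i - z i) \<le> \<delta>) xs zs \<Longrightarrow>
           hs \<in> lists (dball sc N U) \<Longrightarrow>
           list_all2 (\<lambda>f h. dnorm N U (\<lambda>v. f v - h v) \<le> \<theta>) (map (restr U) fs) hs \<Longrightarrow>
           ys \<in> lists (nball N U) \<Longrightarrow> gs \<in> lists (dball sc N Z) \<Longrightarrow>
           F \<epsilon>' U zs hs ys (map (restr U) gs) \<le> \<epsilon>' \<Longrightarrow> F \<epsilon> Z xs fs ys gs \<le> \<epsilon>"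
proof -
  note tf' = tf[unfolded test_family_def]
  note antimono = tf'[THEN conjunct2, THEN conjunct1, rule_format]
  note cont_vectors =
    tf'[THEN conjunct2, THEN conjunct2, THEN conjunct2, THEN conjunct1, rule_format]
  note cont_functionals =
    tf'[THEN conjunct2, THEN conjunct2, THEN conjunct2, THEN conjunct2, rule_format]
  obtain c where c: "c > 0" and restrict: "\<And>U \<epsilon> xs ys fs gs. U \<in> nz_subspaces sc N Z \<Longrightarrow> \<epsilon> > 0 \<Longrightarrow>
      xs \<in> lists (nball N U) \<Longrightarrow> ys \<in> lists (nball N U) \<Longrightarrow>
      fs \<in> lists (dball sc N Z) \<Longrightarrow> gs \<in> lists (dball sc N Z) \<Longrightarrow>
      F \<epsilon> Z xs fs ys gs \<le> c * F \<epsilon> U xs (map (restr U) fs) ys (map (restr U) gs)"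
    using tf'[THEN conjunct2, THEN conjunct2, THEN conjunct1] by blast
  define n m where "n = length xs" and "m = length fs"
  have xsn: "xs \<in> lists_n (nball N Z) n" using xs by (simp add: lists_n_def n_def)
  obtain \<delta> where \<delta>: "\<delta> > 0" and close_vectors: "\<forall>ys\<in>lists (nball N Z). \<forall>gs\<in>lists (dball sc N Z).
      \<forall>zs\<in>lists_n (nball N Z) n. (\<forall>k<n. N (\<lambda>i. (xs!k) i - (zs!k) i) \<le> \<delta>) \<longrightarrow>
        \<bar>F \<epsilon> Z xs fs ys gs - F \<epsilon> Z zs fs ys gs\<bar> \<le> \<epsilon> / 3"
    using cont_vectors[OF \<epsilon> _ fs xsn, of "\<epsilon> / 3"] \<epsilon> by auto
  obtain \<theta> where \<theta>: "\<theta> > 0" and close_functionals: "\<forall>U\<in>nz_subspaces sc N Z.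
      \<forall>zs\<in>lists_n (nball N U) n. \<forall>ys\<in>lists (nball N U). \<forall>gs\<in>lists (dball sc N U).
      \<forall>fs\<in>lists_n (dball sc N U) m. \<forall>hs\<in>lists_n (dball sc N U) m.
        (\<forall>k<m. dnorm N U (\<lambda>v. (fs!k) v - (hs!k) v) \<le> \<theta>) \<longrightarrow>
        \<bar>F \<epsilon> U zs fs ys gs - F \<epsilon> U zs hs ys gs\<bar> \<le> \<epsilon> / (3 * c)"
    using cont_functionals[OF \<epsilon>, of "\<epsilon> / (3 * c)" n m] \<epsilon> c by auto
  define \<epsilon>' where "\<epsilon>' = \<epsilon> / (3 * c + 3)"
  have \<epsilon>': "0 < \<epsilon>'" "\<epsilon>' < \<epsilon>" "c * \<epsilon>' \<le> \<epsilon> / 3"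
    using \<epsilon> c by (auto simp: \<epsilon>'_def field_simps add_pos_pos)
  show thesis
  proof (rule that[OF \<delta> \<theta> \<epsilon>'(1)])
    fix U zs hs ys gs
    assume U: "U \<in> nz_subspaces sc N Z"
      and zs: "zs \<in> lists (nball N U)" "list_all2 (\<lambda>x z. N (\<lambda>i. x i - z i) \<le> \<delta>) xs zs"
      and hs: "hs \<in> lists (dball sc N U)"
        "list_all2 (\<lambda>f h. dnorm N U (\<lambda>v. f v - h v) \<le> \<theta>) (map (restr U) fs) hs"
      and ys: "ys \<in> lists (nball N U)" and gs: "gs \<in> lists (dball sc N Z)"
      and small: "F \<epsilon>' U zs hs ys (map (restr U) gs) \<le> \<epsilon>'"
    have sub: "lin_subspace sc Z U" using U by (simp add: nz_subspaces_def closed_subspaces_def)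
    then have ball_sub: "nball N U \<subseteq> nball N Z" by (auto simp: nball_def lin_subspace_def)
    have fsU: "map (restr U) fs \<in> lists (dball sc N U)"
      and gsU: "map (restr U) gs \<in> lists (dball sc N U)"
      using restr_dball[OF sub] fs gs by auto
    have ysZ: "ys \<in> lists (nball N Z)" and zsZ: "zs \<in> lists (nball N Z)"
      using ball_sub ys zs(1) by auto
    have "\<bar>F \<epsilon> U zs (map (restr U) fs) ys (map (restr U) gs)
        - F \<epsilon> U zs hs ys (map (restr U) gs)\<bar> \<le> \<epsilon> / (3 * c)"
      using close_functionals U zs ys gsU fsU hs
      by (auto simp: lists_n_def list_all2_conv_all_nth n_def m_def)
    moreover have "F \<epsilon> U zs hs ys (map (restr U) gs) \<le> F \<epsilon>' U zs hs ys (map (restr U) gs)"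
      using antimono U \<epsilon>' zs(1) hs(1) ys gsU by blast
    ultimately have "F \<epsilon> U zs (map (restr U) fs) ys (map (restr U) gs) \<le> \<epsilon> / (3 * c) + \<epsilon>'"
      using small by linarith
    then have "F \<epsilon> Z zs fs ys gs \<le> c * (\<epsilon> / (3 * c) + \<epsilon>')"
      using restrict[OF U \<epsilon> zs(1) ys fs gs] c by (meson less_imp_le mult_left_mono order_trans)
    moreover have "\<bar>F \<epsilon> Z xs fs ys gs - F \<epsilon> Z zs fs ys gs\<bar> \<le> \<epsilon> / 3"
      using close_vectors ysZ gs zsZ zs(2) by (simp add: lists_n_def list_all2_conv_all_nth n_def)
    ultimately have "F \<epsilon> Z xs fs ys gs \<le> \<epsilon> / 3 + c * (\<epsilon> / (3 * c) + \<epsilon>')" by linarith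
    also have "\<dots> \<le> \<epsilon>" using \<epsilon>' c by (simp add: field_simps)
    finally show "F \<epsilon> Z xs fs ys gs \<le> \<epsilon>" .
  qed
qed

lemma esum_test_condition:
  fixes F :: "real \<Rightarrow> ('i \<Rightarrow> 'a) set \<Rightarrow> ('i \<Rightarrow> 'a) list \<Rightarrow> (('i \<Rightarrow> 'a) \<Rightarrow> 'k) list
              \<Rightarrow> ('i \<Rightarrow> 'a) list \<Rightarrow> (('i \<Rightarrow> 'a) \<Rightarrow> 'k) list \<Rightarrow> real"
  assumes parts: "\<forall>J. finite J \<and> J \<noteq> {} \<longrightarrow> Ecl (Zpart J)" and tf: "test_family sc N Z Ecl F"
    and nonzero: "Z \<noteq> {\<lambda>i. 0}" and \<epsilon>: "\<epsilon> > 0"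
    and xs: "xs \<in> lists (nsphere N Z)" and fs: "fs \<in> lists (dsphere sc N Z)"
  shows "\<exists>ys\<in>lists (nsphere N Z). \<exists>gs\<in>lists (dsphere sc N Z). F \<epsilon> Z xs fs ys gs \<le> \<epsilon>"
proof -
  have xsb: "xs \<in> lists (nball N Z)" and fsb: "fs \<in> lists (dball sc N Z)"
    using xs fs by (auto simp: nsphere_def nball_def dsphere_def dball_def)
  obtain \<delta> \<theta> \<epsilon>' where "\<delta> > 0" "\<theta> > 0" "\<epsilon>' > 0" and transfer: "\<And>U zs hs ys gs.
      U \<in> nz_subspaces sc N Z \<Longrightarrow>
      zs \<in> lists (nball N U) \<Longrightarrow> list_all2 (\<lambda>x z. N (\<lambda>i. x i - z i) \<le> \<delta>) xs zs \<Longrightarrow>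
      hs \<in> lists (dball sc N U) \<Longrightarrow>
      list_all2 (\<lambda>f h. dnorm N U (\<lambda>v. f v - h v) \<le> \<theta>) (map (restr U) fs) hs \<Longrightarrow>
      ys \<in> lists (nball N U) \<Longrightarrow> gs \<in> lists (dball sc N Z) \<Longrightarrow>
      F \<epsilon>' U zs hs ys (map (restr U) gs) \<le> \<epsilon>' \<Longrightarrow> F \<epsilon> Z xs fs ys gs \<le> \<epsilon>"
    by (rule test_family_transfer[OF tf \<epsilon> xsb fsb]) blast
  obtain J where J: "finite J" "J \<noteq> {}" "Zpart J \<in> nz_subspaces sc N Z"
    and "\<exists>zs\<in>lists (nsphere N (Zpart J)). list_all2 (\<lambda>x z. N (\<lambda>i. x i - z i) \<le> \<delta>) xs zs"
    and "\<exists>hs\<in>lists (dsphere sc N (Zpart J)).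
      list_all2 (\<lambda>f h. dnorm N (Zpart J) (\<lambda>v. f v - h v) \<le> \<theta>) (map (restr (Zpart J)) fs) hs"
    by (rule finite_part_approximation[OF nonzero xs fs \<open>\<delta> > 0\<close> \<open>\<theta> > 0\<close>])
  then obtain zs hs where zs: "zs \<in> lists (nsphere N (Zpart J))"
      "list_all2 (\<lambda>x z. N (\<lambda>i. x i - z i) \<le> \<delta>) xs zs"
    and hs: "hs \<in> lists (dsphere sc N (Zpart J))"
      "list_all2 (\<lambda>f h. dnorm N (Zpart J) (\<lambda>v. f v - h v) \<le> \<theta>) (map (restr (Zpart J)) fs) hs"
    by blast
  have "Ecl (Zpart J)" using parts J(1,2) by blast
  then obtain ys gs where ys: "ys \<in> lists (nsphere N (Zpart J))"
    and gs: "gs \<in> lists (dsphere sc N (Zpart J))" and small: "F \<epsilon>' (Zpart J) zs hs ys gs \<le> \<epsilon>'"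
    using test_family_charD[OF tf J(3), THEN iffD1, rule_format, OF _ \<open>\<epsilon>' > 0\<close> zs(1) hs(1)] by blast
  have restr_ext: "map (restr (Zpart J)) (map (extend J) gs) = gs"
    using gs restr_extend by (auto simp: dsphere_def intro!: map_idI)
  have ext: "map (extend J) gs \<in> lists (dsphere sc N Z)" using gs extend_dsphere by auto
  have balls: "zs \<in> lists (nball N (Zpart J))" "hs \<in> lists (dball sc N (Zpart J))"
    "ys \<in> lists (nball N (Zpart J))" "map (extend J) gs \<in> lists (dball sc N Z)"
    using zs(1) hs(1) ys ext by (auto simp: nsphere_def nball_def dsphere_def dball_def)
  have "F \<epsilon> Z xs fs ys (map (extend J) gs) \<le> \<epsilon>"
    by (rule transfer[OF J(3) balls(1) zs(2) balls(2) hs(2) balls(3,4)])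
      (simp only: restr_ext small)
  moreover have "ys \<in> lists (nsphere N Z)" using ys esum_part_subset by (auto simp: nsphere_def)
  ultimately show ?thesis using ext by blast
qed

lemma esum_in_class_if_finite_parts:
  fixes F :: "real \<Rightarrow> ('i \<Rightarrow> 'a) set \<Rightarrow> ('i \<Rightarrow> 'a) list \<Rightarrow> (('i \<Rightarrow> 'a) \<Rightarrow> 'k) list
              \<Rightarrow> ('i \<Rightarrow> 'a) list \<Rightarrow> (('i \<Rightarrow> 'a) \<Rightarrow> 'k) list \<Rightarrow> real"
  assumes parts: "\<forall>J. finite J \<and> J \<noteq> {} \<longrightarrow> Ecl (Zpart J)" and tf: "test_family sc N Z Ecl F"
  shows "Ecl Z"
proof (cases "Z = {\<lambda>i. 0}")
  case True
  then have "Zpart {undefined} = Z" using esum_part_subset by (auto simp: esum_part_def)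
  then show ?thesis using parts by (metis finite.emptyI finite.insertI insert_not_empty)
next
  case False
  then show ?thesis
    using test_family_charD[OF tf esum_nz_subspace[OF False]] esum_test_condition[OF parts tf False]
    by blast
qed
end

lemma esum_in_class_real:
  fixes X :: "'i \<Rightarrow> 'a::banach set"
    and F :: "real \<Rightarrow> ('i \<Rightarrow> 'a) set \<Rightarrow> ('i \<Rightarrow> 'a) list \<Rightarrow> (('i \<Rightarrow> 'a) \<Rightarrow> real) list
               \<Rightarrow> ('i \<Rightarrow> 'a) list \<Rightarrow> (('i \<Rightarrow> 'a) \<Rightarrow> real) list \<Rightarrow> real"
  assumes "prop34_hyps scaleR X E nE Ecl F"
  shows "Ecl (esum X E)"
proof -
  interpret esum_space E nE scaleR X
    by unfold_locales (use assms in \<open>auto simp: prop34_hyps_def\<close>)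
  show ?thesis
    by (rule esum_in_class_if_finite_parts) (use assms in \<open>auto simp: prop34_hyps_def\<close>)
qed

lemma esum_in_class_complex:
  fixes X :: "'i \<Rightarrow> 'a::banach set" and sc :: "complex \<Rightarrow> 'a \<Rightarrow> 'a"
    and F :: "real \<Rightarrow> ('i \<Rightarrow> 'a) set \<Rightarrow> ('i \<Rightarrow> 'a) list \<Rightarrow> (('i \<Rightarrow> 'a) \<Rightarrow> complex) list
               \<Rightarrow> ('i \<Rightarrow> 'a) list \<Rightarrow> (('i \<Rightarrow> 'a) \<Rightarrow> complex) list \<Rightarrow> real"
  assumes "complex_structure sc" and "prop34_hyps sc X E nE Ecl F"
  shows "Ecl (esum X E)"
proof -
  interpret esum_space E nE sc X
    by unfold_locales (use assms in \<open>auto simp: prop34_hyps_def complex_structure_def\<close>)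
  show ?thesis
    by (rule esum_in_class_if_finite_parts) (use assms in \<open>auto simp: prop34_hyps_def\<close>)
qed

theorem proposition3p4:
  fixes X1 :: "'i \<Rightarrow> 'a::banach set"
    and E1 :: "('i \<Rightarrow> real) set" and nE1 :: "('i \<Rightarrow> real) \<Rightarrow> real"
    and Ecl1 :: "('i \<Rightarrow> 'a) set \<Rightarrow> bool"
    and F1 :: "real \<Rightarrow> ('i \<Rightarrow> 'a) set \<Rightarrow> ('i \<Rightarrow> 'a) list \<Rightarrow> (('i \<Rightarrow> 'a) \<Rightarrow> real) list
               \<Rightarrow> ('i \<Rightarrow> 'a) list \<Rightarrow> (('i \<Rightarrow> 'a) \<Rightarrow> real) list \<Rightarrow> real"
    and sc :: "complex \<Rightarrow> 'b::banach \<Rightarrow> 'b"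
    and X2 :: "'j \<Rightarrow> 'b set"
    and E2 :: "('j \<Rightarrow> real) set" and nE2 :: "('j \<Rightarrow> real) \<Rightarrow> real"
    and Ecl2 :: "('j \<Rightarrow> 'b) set \<Rightarrow> bool"
    and F2 :: "real \<Rightarrow> ('j \<Rightarrow> 'b) set \<Rightarrow> ('j \<Rightarrow> 'b) list \<Rightarrow> (('j \<Rightarrow> 'b) \<Rightarrow> complex) list
               \<Rightarrow> ('j \<Rightarrow> 'b) list \<Rightarrow> (('j \<Rightarrow> 'b) \<Rightarrow> complex) list \<Rightarrow> real"
  shows "(prop34_hyps scaleR X1 E1 nE1 Ecl1 F1 \<longrightarrow> Ecl1 (esum X1 E1)) \<and>
         (complex_structure sc \<and> prop34_hyps sc X2 E2 nE2 Ecl2 F2 \<longrightarrow> Ecl2 (esum X2 E2))"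
  using esum_in_class_real esum_in_class_complex by blast

end
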